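(* Let $a,b,m>0$ be real numbers. Suppose $p,q$ are increasing functions on the positive integers with \[\frac{p(n)}{n^m}\to a\quad\text{and}\quad\frac{q(n)}{n^m}\to b.\] Let $h_n:=\frac{1}{p(n)}$ and $k_n:=\frac{1}{q(n)}$. Let $f$ be a real valued function defined on $D=\{0,h_1,-k_1,h_2,-k_2,\ldots\}$ and let $R,L$ be real numbers. If $f(0)=0$ and \[\frac{f(h_n)}{h_n}\to R\quad\text{and}\quad\frac{f(-k_n)}{-k_n}\to L,\] then every real number between $L$ and $R$ is a sequential cord derivative of $f$ at $0$.
   Context: $L'\in\overline{\mathbb{R}}=\mathbb{R}\cup\{\pm\infty\}$ is a sequential cord derivative of $f$ at $0$ if there are sequences $h'_n>0$, $k'_n>0$ with $h'_n\to0$, $k'_n\to0$, $h'_n\in D$, $-k'_n\in D$ for all $n$, and $\frac{f(h'_n)-f(-k'_n)}{h'_n+k'_n}\to L'$. *)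

theory Defs
  imports Complex_Main "HOL-Library.Extended_Real"
begin

definition seq_cord_deriv :: "(real \<Rightarrow> real) \<Rightarrow> real set \<Rightarrow> ereal \<Rightarrow> bool" where
  "seq_cord_deriv f D L' \<longleftrightarrow>
     (\<exists>hh kk :: nat \<Rightarrow> real.
        (\<forall>n. hh n > 0 \<and> kk n > 0 \<and> hh n \<in> D \<and> - kk n \<in> D) \<and>
        hh \<longlonglongrightarrow> 0 \<and> kk \<longlonglongrightarrow> 0 \<and>
        (\<lambda>n. ereal ((f (hh n) - f (- kk n)) / (hh n + kk n))) \<longlonglongrightarrow> L')"

end

theory Submission
  imports Defs
begin

text \<open>With \<open>h = 1/p(i)\<close> and \<open>k = 1/q(j)\<close> the cord quotient \<open>(f(h) - f(-k))/(h + k)\<close> is the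
  average of \<open>f(h)/h\<close> and \<open>f(-k)/(-k)\<close> with weights \<open>h\<close> and \<open>k\<close>. Along index sequences
  \<open>i\<^sub>n, j\<^sub>n \<rightarrow> \<infinity>\<close> with \<open>h/k = q(j\<^sub>n)/p(i\<^sub>n) \<rightarrow> s\<close> it therefore tends to \<open>(s R + L)/(s + 1)\<close>;
  as \<open>s\<close> ranges over \<open>[0, \<infinity>)\<close> this sweeps out every value between \<open>L\<close> and \<open>R\<close> except \<open>R\<close>,
  which is the case \<open>s = \<infinity>\<close>. Since \<open>p(n) \<sim> a n\<^sup>m\<close> and \<open>q(n) \<sim> b n\<^sup>m\<close>, the ratio
  \<open>q(j\<^sub>n)/p(i\<^sub>n)\<close> tends to \<open>(b/a) c\<^sup>m\<close> whenever \<open>j\<^sub>n/i\<^sub>n \<rightarrow> c\<close>, and every \<open>c \<ge> 0\<close> arises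
  so, e.g. from \<open>i\<^sub>n = (n+1)\<^sup>2\<close>, \<open>j\<^sub>n = \<lceil>c i\<^sub>n\<rceil> + n + 1\<close>.\<close>

lemma powr_asymp_inverse_tendsto_0:
  fixes P :: "nat \<Rightarrow> real"
  assumes "\<alpha> > 0" "m > 0" and P: "(\<lambda>n. P n / real n powr m) \<longlonglongrightarrow> \<alpha>"
  shows "(\<lambda>n. 1 / P n) \<longlonglongrightarrow> 0"
proof -
  have "(\<lambda>n. real n powr (- m)) \<longlonglongrightarrow> 0"
    using tendsto_neg_powr[OF _ filterlim_real_sequentially] \<open>m > 0\<close> by simp
  then have "(\<lambda>n. real n powr (- m) / (P n / real n powr m)) \<longlonglongrightarrow> 0 / \<alpha>"
    using \<open>\<alpha> > 0\<close> by (intro tendsto_divide P) auto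
  moreover have "\<forall>\<^sub>F n in sequentially. real n powr (- m) / (P n / real n powr m) = 1 / P n"
    using eventually_gt_at_top[of 0] by eventually_elim (simp add: powr_minus field_simps)
  ultimately show ?thesis by (simp add: Lim_transform_eventually)
qed

lemma powr_asymp_ratio_tendsto:
  fixes P Q :: "nat \<Rightarrow> real" and I J :: "nat \<Rightarrow> nat"
  assumes "\<alpha> > 0"
    and P: "(\<lambda>n. P n / real n powr m) \<longlonglongrightarrow> \<alpha>"
    and Q: "(\<lambda>n. Q n / real n powr m) \<longlonglongrightarrow> \<beta>"
    and I: "filterlim I at_top sequentially" and J: "filterlim J at_top sequentially"
    and ratio: "(\<lambda>n. real (J n) / real (I n)) \<longlonglongrightarrow> c" and "c \<ge> 0" "m > 0"
    and pos: "\<forall>n. I n \<ge> 1 \<and> J n \<ge> 1"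
  shows "(\<lambda>n. Q (J n) / P (I n)) \<longlonglongrightarrow> \<beta> / \<alpha> * c powr m"
proof -
  have "(\<lambda>n. Q (J n) / real (J n) powr m * (real (J n) / real (I n)) powr m
          / (P (I n) / real (I n) powr m)) \<longlonglongrightarrow> \<beta> * c powr m / \<alpha>"
    using filterlim_compose[OF P I] filterlim_compose[OF Q J] \<open>\<alpha> > 0\<close> ratio \<open>c \<ge> 0\<close> \<open>m > 0\<close>
    by (intro tendsto_intros tendsto_powr') (auto simp: o_def)
  moreover have "Q (J n) / real (J n) powr m * (real (J n) / real (I n)) powr m
          / (P (I n) / real (I n) powr m) = Q (J n) / P (I n)" for n
    using pos[rule_format, of n] by (simp add: powr_divide field_simps)
  ultimately show ?thesis by simp
qed

lemma cord_quotient_eq_weighted_average: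
  fixes P Q :: real
  assumes "P > 0" "Q > 0"
  shows "(f (1 / P) - f (- (1 / Q))) / (1 / P + 1 / Q)
    = (Q / P * (f (1 / P) / (1 / P)) + f (- (1 / Q)) / (- (1 / Q))) / (Q / P + 1)"
  using assms by (simp add: field_simps)

lemma cord_quotient_tendsto:
  fixes P Q :: "nat \<Rightarrow> real"
  assumes pos: "\<forall>n. P n > 0 \<and> Q n > 0"
    and R: "(\<lambda>n. f (1 / P n) / (1 / P n)) \<longlonglongrightarrow> R"
    and L: "(\<lambda>n. f (- (1 / Q n)) / (- (1 / Q n))) \<longlonglongrightarrow> L"
    and ratio: "(\<lambda>n. Q n / P n) \<longlonglongrightarrow> s" "s \<ge> 0"
  shows "(\<lambda>n. (f (1 / P n) - f (- (1 / Q n))) / (1 / P n + 1 / Q n)) \<longlonglongrightarrow> (s * R + L) / (s + 1)"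
  unfolding cord_quotient_eq_weighted_average[OF pos[rule_format, THEN conjunct1]
      pos[rule_format, THEN conjunct2]]
  using ratio by (intro tendsto_intros R L) auto

lemma cord_quotient_tendsto_right:
  fixes P Q :: "nat \<Rightarrow> real"
  assumes pos: "\<forall>n. P n > 0 \<and> Q n > 0"
    and R: "(\<lambda>n. f (1 / P n) / (1 / P n)) \<longlonglongrightarrow> R"
    and L: "(\<lambda>n. f (- (1 / Q n)) / (- (1 / Q n))) \<longlonglongrightarrow> L"
    and ratio: "(\<lambda>n. P n / Q n) \<longlonglongrightarrow> 0"
  shows "(\<lambda>n. (f (1 / P n) - f (- (1 / Q n))) / (1 / P n + 1 / Q n)) \<longlonglongrightarrow> R"
proof -
  have "(\<lambda>n. (f (1 / P n) / (1 / P n) + P n / Q n * (f (- (1 / Q n)) / (- (1 / Q n))))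
      / (1 + P n / Q n)) \<longlonglongrightarrow> (R + 0 * L) / (1 + 0)"
    using ratio by (intro tendsto_intros R L) auto
  moreover have "(f (1 / P n) / (1 / P n) + P n / Q n * (f (- (1 / Q n)) / (- (1 / Q n))))
      / (1 + P n / Q n) = (f (1 / P n) - f (- (1 / Q n))) / (1 / P n + 1 / Q n)" for n
    using pos[rule_format, of n] by (simp add: field_simps)
  ultimately show ?thesis by simp
qed

lemma ceiling_index_ratio_tendsto:
  fixes c :: real
  assumes "c \<ge> 0"
  shows "(\<lambda>n. real (nat \<lceil>c * real ((n + 1)\<^sup>2)\<rceil> + (n + 1)) / real ((n + 1)\<^sup>2)) \<longlonglongrightarrow> c"
proof (rule tendsto_sandwich[of "\<lambda>n. c" _ _ "\<lambda>n. c + 2 / real (Suc n)"])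
  show "(\<lambda>n. c + 2 / real (Suc n)) \<longlonglongrightarrow> c"
    using tendsto_add[OF tendsto_const LIMSEQ_Suc[OF lim_const_over_n[of 2]]] by simp
  have bounds: "c \<le> real (nat \<lceil>c * real ((n + 1)\<^sup>2)\<rceil> + (n + 1)) / real ((n + 1)\<^sup>2) \<and>
      real (nat \<lceil>c * real ((n + 1)\<^sup>2)\<rceil> + (n + 1)) / real ((n + 1)\<^sup>2) \<le> c + 2 / real (Suc n)"
    for n
  proof -
    define N where "N = real (Suc n)"
    have N: "N \<ge> 1" unfolding N_def by simp
    have den: "real ((n + 1)\<^sup>2) = N\<^sup>2"
      and num: "real (nat \<lceil>c * N\<^sup>2\<rceil> + (n + 1)) = of_int \<lceil>c * N\<^sup>2\<rceil> + N"
      using \<open>c \<ge> 0\<close> unfolding N_def by simp_all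
    have "c * N\<^sup>2 \<le> of_int \<lceil>c * N\<^sup>2\<rceil>" "of_int \<lceil>c * N\<^sup>2\<rceil> \<le> c * N\<^sup>2 + 1"
      by linarith+
    moreover have "(c + 2 / N) * N\<^sup>2 = c * N\<^sup>2 + 2 * N"
      using N by (simp add: power2_eq_square field_simps)
    ultimately have "c * N\<^sup>2 \<le> of_int \<lceil>c * N\<^sup>2\<rceil> + N" "of_int \<lceil>c * N\<^sup>2\<rceil> + N \<le> (c + 2 / N) * N\<^sup>2"
      using N by linarith+
    then have "c \<le> (of_int \<lceil>c * N\<^sup>2\<rceil> + N) / N\<^sup>2" "(of_int \<lceil>c * N\<^sup>2\<rceil> + N) / N\<^sup>2 \<le> c + 2 / N"
      using N by (simp_all add: le_divide_eq divide_le_eq)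
    then show ?thesis
      unfolding den N_def[symmetric] num by blast
  qed
  show "\<forall>\<^sub>F n in sequentially. c \<le> real (nat \<lceil>c * real ((n + 1)\<^sup>2)\<rceil> + (n + 1)) / real ((n + 1)\<^sup>2)"
    "\<forall>\<^sub>F n in sequentially. real (nat \<lceil>c * real ((n + 1)\<^sup>2)\<rceil> + (n + 1)) / real ((n + 1)\<^sup>2)
      \<le> c + 2 / real (Suc n)"
    using bounds by auto
qed simp

lemma seq_cord_deriv_along_indices:
  fixes p q :: "nat \<Rightarrow> real" and I J :: "nat \<Rightarrow> nat"
  assumes pos: "\<forall>n\<ge>1. p n > 0" "\<forall>n\<ge>1. q n > 0"
    and null: "(\<lambda>n. 1 / p n) \<longlonglongrightarrow> 0" "(\<lambda>n. 1 / q n) \<longlonglongrightarrow> 0"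
    and I: "filterlim I at_top sequentially" and J: "filterlim J at_top sequentially"
    and IJ: "\<forall>n. I n \<ge> 1 \<and> J n \<ge> 1"
    and lim: "(\<lambda>n. (f (1 / p (I n)) - f (- (1 / q (J n)))) / (1 / p (I n) + 1 / q (J n))) \<longlonglongrightarrow> x"
  shows "seq_cord_deriv f ({0} \<union> {1 / p n | n. n \<ge> 1} \<union> {- (1 / q n) | n. n \<ge> 1}) (ereal x)"
  unfolding seq_cord_deriv_def
proof (intro exI conjI allI)
  fix n
  show "1 / p (I n) > 0" "1 / q (J n) > 0" using IJ pos by auto
  show "1 / p (I n) \<in> {0} \<union> {1 / p n | n. n \<ge> 1} \<union> {- (1 / q n) | n. n \<ge> 1}"
    "- (1 / q (J n)) \<in> {0} \<union> {1 / p n | n. n \<ge> 1} \<union> {- (1 / q n) | n. n \<ge> 1}"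
    using IJ by blast+
next
  show "(\<lambda>n. 1 / p (I n)) \<longlonglongrightarrow> 0" "(\<lambda>n. 1 / q (J n)) \<longlonglongrightarrow> 0"
    using filterlim_compose[OF null(1) I] filterlim_compose[OF null(2) J] by (simp_all add: o_def)
  show "(\<lambda>n. ereal ((f (1 / p (I n)) - f (- (1 / q (J n)))) / (1 / p (I n) + 1 / q (J n))))
      \<longlonglongrightarrow> ereal x"
    using lim by (simp add: lim_ereal)
qed

lemma index_sequences_with_ratio:
  fixes c :: real
  assumes "c \<ge> 0"
  obtains I J :: "nat \<Rightarrow> nat"
  where "filterlim I at_top sequentially" "filterlim J at_top sequentially"
    "\<forall>n. I n \<ge> 1 \<and> J n \<ge> 1" "(\<lambda>n. real (J n) / real (I n)) \<longlonglongrightarrow> c"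
proof
  show "filterlim (\<lambda>n. (n + 1)\<^sup>2) at_top sequentially"
    "filterlim (\<lambda>n. nat \<lceil>c * real ((n + 1)\<^sup>2)\<rceil> + (n + 1)) at_top sequentially"
    by (auto intro!: filterlim_at_top_mono[OF filterlim_Suc] simp: power2_eq_square)
qed (use ceiling_index_ratio_tendsto[OF assms] in auto)

lemma between_eq_weighted_average:
  fixes L R x :: real
  assumes "min L R \<le> x" "x \<le> max L R" "x \<noteq> R"
  obtains s where "s \<ge> 0" "x = (s * R + L) / (s + 1)"
proof
  show "(x - L) / (R - x) \<ge> 0"
    using assms by (cases "L \<le> R") (auto simp: divide_nonneg_nonneg divide_nonpos_nonpos)
  have "R - x \<noteq> 0" "R - L \<noteq> 0" using assms by auto
  then have "(x - L) / (R - x) * R + L = x * (R - L) / (R - x)"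
    and "(x - L) / (R - x) + 1 = (R - L) / (R - x)"
    by (simp_all add: field_simps)
  with \<open>R - x \<noteq> 0\<close> \<open>R - L \<noteq> 0\<close> show "x = ((x - L) / (R - x) * R + L) / ((x - L) / (R - x) + 1)"
    by simp
qed

context
  fixes a b m R L :: real and p q :: "nat \<Rightarrow> real" and f :: "real \<Rightarrow> real"
  assumes a: "a > 0" and b: "b > 0" and m: "m > 0"
    and p_pos: "\<forall>n\<ge>1. p n > 0" and q_pos: "\<forall>n\<ge>1. q n > 0"
    and p_asymp: "(\<lambda>n. p n / real n powr m) \<longlonglongrightarrow> a"
    and q_asymp: "(\<lambda>n. q n / real n powr m) \<longlonglongrightarrow> b"
    and R: "(\<lambda>n. f (1 / p n) / (1 / p n)) \<longlonglongrightarrow> R"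
    and L: "(\<lambda>n. f (- (1 / q n)) / (- (1 / q n))) \<longlonglongrightarrow> L"
begin

lemma seq_cord_deriv_along:
  assumes "filterlim I at_top sequentially" "filterlim J at_top sequentially"
    "\<forall>n. I n \<ge> 1 \<and> J n \<ge> 1"
    "(\<lambda>n. (f (1 / p (I n)) - f (- (1 / q (J n)))) / (1 / p (I n) + 1 / q (J n))) \<longlonglongrightarrow> x"
  shows "seq_cord_deriv f ({0} \<union> {1 / p n | n. n \<ge> 1} \<union> {- (1 / q n) | n. n \<ge> 1}) (ereal x)"
  using assms p_pos q_pos powr_asymp_inverse_tendsto_0[OF a m p_asymp]
    powr_asymp_inverse_tendsto_0[OF b m q_asymp]
  by (intro seq_cord_deriv_along_indices) auto

lemma one_sided_quotients_along:
  assumes "filterlim I at_top sequentially"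
  shows "(\<lambda>n. f (1 / p (I n)) / (1 / p (I n))) \<longlonglongrightarrow> R"
    and "(\<lambda>n. f (- (1 / q (I n))) / (- (1 / q (I n)))) \<longlonglongrightarrow> L"
  using filterlim_compose[OF R assms] filterlim_compose[OF L assms] by (simp_all add: o_def)

lemma seq_cord_deriv_right_value:
  "seq_cord_deriv f ({0} \<union> {1 / p n | n. n \<ge> 1} \<union> {- (1 / q n) | n. n \<ge> 1}) (ereal R)"
proof -
  obtain I J where IJ: "filterlim I at_top sequentially" "filterlim J at_top sequentially"
    "\<forall>n. I n \<ge> 1 \<and> J n \<ge> 1" "(\<lambda>n. real (J n) / real (I n)) \<longlonglongrightarrow> 0"
    using index_sequences_with_ratio[of 0] by auto
  have "(\<lambda>n. p (J n) / q (I n)) \<longlonglongrightarrow> a / b * 0 powr m"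
    using b m q_asymp p_asymp IJ by (intro powr_asymp_ratio_tendsto) auto
  then have "(\<lambda>n. (f (1 / p (J n)) - f (- (1 / q (I n)))) / (1 / p (J n) + 1 / q (I n))) \<longlonglongrightarrow> R"
    using IJ p_pos q_pos one_sided_quotients_along
    by (intro cord_quotient_tendsto_right) auto
  then show ?thesis
    using IJ by (intro seq_cord_deriv_along) auto
qed

lemma seq_cord_deriv_weighted_value:
  assumes "s \<ge> 0"
  shows "seq_cord_deriv f ({0} \<union> {1 / p n | n. n \<ge> 1} \<union> {- (1 / q n) | n. n \<ge> 1})
    (ereal ((s * R + L) / (s + 1)))"
proof -
  define c where "c = (s * a / b) powr (1 / m)"
  have c: "c \<ge> 0" "b / a * c powr m = s"
    unfolding c_def using a b m assms by (simp_all add: powr_powr)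
  obtain I J where IJ: "filterlim I at_top sequentially" "filterlim J at_top sequentially"
    "\<forall>n. I n \<ge> 1 \<and> J n \<ge> 1" "(\<lambda>n. real (J n) / real (I n)) \<longlonglongrightarrow> c"
    using index_sequences_with_ratio[OF c(1)] by auto
  have "(\<lambda>n. q (J n) / p (I n)) \<longlonglongrightarrow> s"
    using powr_asymp_ratio_tendsto[OF a p_asymp q_asymp IJ(1,2,4) c(1) m] IJ(3) c(2) by simp
  then have "(\<lambda>n. (f (1 / p (I n)) - f (- (1 / q (J n)))) / (1 / p (I n) + 1 / q (J n)))
      \<longlonglongrightarrow> (s * R + L) / (s + 1)"
    using assms IJ p_pos q_pos one_sided_quotients_along
    by (intro cord_quotient_tendsto) auto
  then show ?thesis
    using IJ by (intro seq_cord_deriv_along) auto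
qed

end

theorem theorem4p5:
  fixes a b m R L :: real and p q :: "nat \<Rightarrow> real" and f :: "real \<Rightarrow> real"
  assumes "a > 0" and "b > 0" and "m > 0"
    and "mono_on {1..} p" and "mono_on {1..} q"
    and "\<forall>n\<ge>1. p n > 0" and "\<forall>n\<ge>1. q n > 0"
    and "(\<lambda>n. p n / real n powr m) \<longlonglongrightarrow> a"
    and "(\<lambda>n. q n / real n powr m) \<longlonglongrightarrow> b"
    and "f 0 = 0"
    and "(\<lambda>n. f (1 / p n) / (1 / p n)) \<longlonglongrightarrow> R"
    and "(\<lambda>n. f (- (1 / q n)) / (- (1 / q n))) \<longlonglongrightarrow> L"
  shows "\<forall>x. min L R \<le> x \<and> x \<le> max L R \<longrightarrow>
           seq_cord_deriv f ({0} \<union> {1 / p n | n. n \<ge> 1} \<union> {- (1 / q n) | n. n \<ge> 1}) (ereal x)"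
proof (intro allI impI)
  fix x assume x: "min L R \<le> x \<and> x \<le> max L R"
  show "seq_cord_deriv f ({0} \<union> {1 / p n | n. n \<ge> 1} \<union> {- (1 / q n) | n. n \<ge> 1}) (ereal x)"
  proof (cases "x = R")
    case True
    then show ?thesis
      using seq_cord_deriv_right_value[OF assms(1-3,6-9,11,12)] by simp
  next
    case False
    with x obtain s where "s \<ge> 0" "x = (s * R + L) / (s + 1)"
      using between_eq_weighted_average by blast
    then show ?thesis
      using seq_cord_deriv_weighted_value[OF assms(1-3,6-9,11,12)] by simp
  qed
qed

end
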